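(* Every orbit in $\mathbf B_{IX}$ has a non-empty $\omega$-limit set, and this set is contained in $\overline{\mathbf B}_{\mathrm{VII}_0}$, the closure of the union of the three Bianchi type $\mathrm{VII}_0$ subsets.
   Context: Fix $w$ with $-\tfrac13<w<1$. Variables $(\bar H,\bar\Sigma_1,\bar\Sigma_2,\bar\Sigma_3,\bar N_1,\bar N_2,\bar N_3)\in\mathbb R^7$; set $\bar\Sigma^2=\tfrac16(\bar\Sigma_1^2+\bar\Sigma_2^2+\bar\Sigma_3^2)$ and $\bar\Omega=1-\bar\Sigma^2-\tfrac1{12}(\bar N_1^2+\bar N_2^2+\bar N_3^2)$. Admissible states satisfy $\bar\Sigma_1+\bar\Sigma_2+\bar\Sigma_3=0$, $\bar H^2+\tfrac16(\bar N_1\bar N_2+\bar N_1\bar N_3+\bar N_2\bar N_3)=1$, $\bar\Omega\ge0$. The dynamics in the time $\tau$ (increasing towards the past singularity) is $\frac{d\bar H}{d\tau}=\bar q(1-\bar H^2)-\bar F\bar H$, $\frac{d\bar\Sigma_\alpha}{d\tau}=\bar\Sigma_\alpha[(2-\bar q)\bar H-\bar F]+{}^3\bar S_\alpha$, $\frac{d\bar N_\alpha}{d\tau}=-\bar N_\alpha[\bar q\bar H+2\bar\Sigma_\alpha+\bar F]$ (no sum), with $\bar q=2\bar\Sigma^2+\tfrac12(1+3w)\bar\Omega$, $\bar F=\tfrac16(\bar N_1\bar N_2\bar\Sigma_3+\bar N_1\bar\Sigma_2\bar N_3+\bar\Sigma_1\bar N_2\bar N_3)$, ${}^3\bar S_\alpha=\tfrac13[\bar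 N_\alpha(2\bar N_\alpha-\bar N_\beta-\bar N_\gamma)-(\bar N_\beta-\bar N_\gamma)^2]$ for $(\alpha\beta\gamma)\in\{(123),(231),(312)\}$. $\mathbf B_{IX}=\{\bar N_1,\bar N_2,\bar N_3>0,\ \bar H>0,\ \bar\Omega\ge0\}$ (with the constraints), invariant for increasing $\tau$. $\omega$-limit sets are taken as $\tau\to+\infty$. The Bianchi $\mathrm{VII}_0$ subsets are $\mathcal B_{\bar N_\alpha\bar N_\beta}=\{\bar N_\alpha>0,\bar N_\beta>0,\bar N_\gamma=0,\bar H>0,\bar\Omega\ge0\}$ for $(\alpha\beta\gamma)\in\{(123),(231),(312)\}$, and $\mathbf B_{\mathrm{VII}_0}$ is their union. *)

theory Defs
  imports "HOL-Analysis.Analysis"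
begin

text \<open>State vector (H, Sigma1, Sigma2, Sigma3, N1, N2, N3) in real^7,
  with components indexed 0..6 (numeral type 7).\<close>

definition Hc :: "real^7 \<Rightarrow> real" where "Hc x = x $ 0"
definition S1 :: "real^7 \<Rightarrow> real" where "S1 x = x $ 1"
definition S2 :: "real^7 \<Rightarrow> real" where "S2 x = x $ 2"
definition S3 :: "real^7 \<Rightarrow> real" where "S3 x = x $ 3"
definition N1 :: "real^7 \<Rightarrow> real" where "N1 x = x $ 4"
definition N2 :: "real^7 \<Rightarrow> real" where "N2 x = x $ 5"
definition N3 :: "real^7 \<Rightarrow> real" where "N3 x = x $ 6"

definition Sig2 :: "real^7 \<Rightarrow> real" where
  "Sig2 x = (S1 x ^ 2 + S2 x ^ 2 + S3 x ^ 2) / 6"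

definition Omg :: "real^7 \<Rightarrow> real" where
  "Omg x = 1 - Sig2 x - (N1 x ^ 2 + N2 x ^ 2 + N3 x ^ 2) / 12"

definition qb :: "real \<Rightarrow> real^7 \<Rightarrow> real" where
  "qb w x = 2 * Sig2 x + (1 + 3 * w) / 2 * Omg x"

definition Fb :: "real^7 \<Rightarrow> real" where
  "Fb x = (N1 x * N2 x * S3 x + N1 x * S2 x * N3 x + S1 x * N2 x * N3 x) / 6"

text \<open>Curvature term 3S_alpha for (alpha beta gamma) cyclic.\<close>
definition Scurv :: "real \<Rightarrow> real \<Rightarrow> real \<Rightarrow> real" where
  "Scurv na nb nc = (na * (2 * na - nb - nc) - (nb - nc) ^ 2) / 3"

definition admissible :: "real^7 \<Rightarrow> bool" where
  "admissible x \<longleftrightarrow> S1 x + S2 x + S3 x = 0 \<and>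
     Hc x ^ 2 + (N1 x * N2 x + N1 x * N3 x + N2 x * N3 x) / 6 = 1 \<and>
     Omg x \<ge> 0"

definition vfield :: "real \<Rightarrow> real^7 \<Rightarrow> real^7" where
  "vfield w x = (\<chi> i.
     if i = 0 then qb w x * (1 - Hc x ^ 2) - Fb x * Hc x
     else if i = 1 then S1 x * ((2 - qb w x) * Hc x - Fb x) + Scurv (N1 x) (N2 x) (N3 x)
     else if i = 2 then S2 x * ((2 - qb w x) * Hc x - Fb x) + Scurv (N2 x) (N3 x) (N1 x)
     else if i = 3 then S3 x * ((2 - qb w x) * Hc x - Fb x) + Scurv (N3 x) (N1 x) (N2 x)
     else if i = 4 then - N1 x * (qb w x * Hc x + 2 * S1 x + Fb x)
     else if i = 5 then - N2 x * (qb w x * Hc x + 2 * S2 x + Fb x)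
     else - N3 x * (qb w x * Hc x + 2 * S3 x + Fb x))"

definition B_IX :: "(real^7) set" where
  "B_IX = {x. admissible x \<and> N1 x > 0 \<and> N2 x > 0 \<and> N3 x > 0 \<and> Hc x > 0}"

definition B_N1N2 :: "(real^7) set" where
  "B_N1N2 = {x. admissible x \<and> N1 x > 0 \<and> N2 x > 0 \<and> N3 x = 0 \<and> Hc x > 0}"
definition B_N2N3 :: "(real^7) set" where
  "B_N2N3 = {x. admissible x \<and> N2 x > 0 \<and> N3 x > 0 \<and> N1 x = 0 \<and> Hc x > 0}"
definition B_N3N1 :: "(real^7) set" where
  "B_N3N1 = {x. admissible x \<and> N3 x > 0 \<and> N1 x > 0 \<and> N2 x = 0 \<and> Hc x > 0}"

definition B_VII0 :: "(real^7) set" where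
  "B_VII0 = B_N1N2 \<union> B_N2N3 \<union> B_N3N1"

definition omega_limit :: "(real \<Rightarrow> 'a::topological_space) \<Rightarrow> 'a set" where
  "omega_limit x = {y. \<exists>s :: nat \<Rightarrow> real. filterlim s at_top sequentially \<and>
                         ((\<lambda>n. x (s n)) \<longlongrightarrow> y) sequentially}"

end

theory Submission
  imports Defs
begin

text \<open>The constraints and the signs of \<open>N\<^sub>\<alpha>\<close> and \<open>H\<close> propagate along the flow by linear
  differential inequalities, so the orbit stays in a compact set and its \<open>\<omega>\<close>-limit set is non-empty.
  The function \<open>N\<^sub>1N\<^sub>2N\<^sub>3/H\<^sup>3\<close> decreases at the rate \<open>3qN\<^sub>1N\<^sub>2N\<^sub>3/H\<^sup>4\<close>, so it is
  stationary on the \<open>\<omega>\<close>-limit set; at a limit point with all \<open>N\<^sub>\<alpha> > 0\<close> this forces \<open>q = 0\<close>,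
  i.e. \<open>\<Sigma> = 0\<close> and \<open>\<Omega> = 0\<close>. There the curvature \<open>\<^sup>3S\<close> does not vanish and pushes \<open>\<Sigma>\<close>
  away from zero, so a small correction of the Lyapunov function by \<open>\<Sigma> \<bullet> \<^sup>3S\<close> still decreases
  uniformly nearby, which is impossible. Hence every \<open>\<omega>\<close>-limit point has some \<open>N\<^sub>\<alpha> = 0\<close>, and
  such admissible points are limits of Bianchi \<open>VII\<^sub>0\<close> states.\<close>

lemma vfield_components:
  "Hc (vfield w z) = qb w z * (1 - Hc z ^ 2) - Fb z * Hc z"
  "S1 (vfield w z) = S1 z * ((2 - qb w z) * Hc z - Fb z) + Scurv (N1 z) (N2 z) (N3 z)"
  "S2 (vfield w z) = S2 z * ((2 - qb w z) * Hc z - Fb z) + Scurv (N2 z) (N3 z) (N1 z)"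
  "S3 (vfield w z) = S3 z * ((2 - qb w z) * Hc z - Fb z) + Scurv (N3 z) (N1 z) (N2 z)"
  "N1 (vfield w z) = - N1 z * (qb w z * Hc z + 2 * S1 z + Fb z)"
  "N2 (vfield w z) = - N2 z * (qb w z * Hc z + 2 * S2 z + Fb z)"
  "N3 (vfield w z) = - N3 z * (qb w z * Hc z + 2 * S3 z + Fb z)"
  by (simp_all add: vfield_def Hc_def S1_def S2_def S3_def N1_def N2_def N3_def)

lemma continuous_on_components [continuous_intros]:
  fixes f :: "'a::topological_space \<Rightarrow> real^7"
  assumes "continuous_on A f"
  shows "continuous_on A (\<lambda>t. Hc (f t))" "continuous_on A (\<lambda>t. S1 (f t))"
    "continuous_on A (\<lambda>t. S2 (f t))" "continuous_on A (\<lambda>t. S3 (f t))"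
    "continuous_on A (\<lambda>t. N1 (f t))" "continuous_on A (\<lambda>t. N2 (f t))"
    "continuous_on A (\<lambda>t. N3 (f t))"
  unfolding Hc_def S1_def S2_def S3_def N1_def N2_def N3_def
  by (intro continuous_intros assms)+

lemma continuous_on_state_functions [continuous_intros]:
  fixes f :: "'a::topological_space \<Rightarrow> real^7"
  assumes "continuous_on A f"
  shows "continuous_on A (\<lambda>t. Omg (f t))" "continuous_on A (\<lambda>t. qb w (f t))"
    "continuous_on A (\<lambda>t. Fb (f t))"
  unfolding qb_def Omg_def Sig2_def Fb_def
  by (auto intro!: continuous_intros assms)

lemma continuous_on_Scurv [continuous_intros]:
  "continuous_on A a \<Longrightarrow> continuous_on A b \<Longrightarrow> continuous_on A c \<Longrightarrow>
    continuous_on A (\<lambda>t. Scurv (a t) (b t) (c t))"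
  unfolding Scurv_def by (auto intro!: continuous_intros)

lemma isCont_components [continuous_intros]:
  fixes f :: "'a::t2_space \<Rightarrow> real^7"
  assumes "isCont f a"
  shows "isCont (\<lambda>t. Hc (f t)) a" "isCont (\<lambda>t. S1 (f t)) a" "isCont (\<lambda>t. S2 (f t)) a"
    "isCont (\<lambda>t. S3 (f t)) a" "isCont (\<lambda>t. N1 (f t)) a" "isCont (\<lambda>t. N2 (f t)) a"
    "isCont (\<lambda>t. N3 (f t)) a"
  unfolding Hc_def S1_def S2_def S3_def N1_def N2_def N3_def
  by (intro continuous_intros assms)+

lemma isCont_state_functions [continuous_intros]:
  fixes f :: "'a::t2_space \<Rightarrow> real^7"
  assumes "isCont f a"
  shows "isCont (\<lambda>t. qb w (f t)) a" "isCont (\<lambda>t. Fb (f t)) a"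
  unfolding qb_def Omg_def Sig2_def Fb_def
  by (auto intro!: continuous_intros assms)

lemma isCont_Scurv [continuous_intros]:
  "isCont f y \<Longrightarrow> isCont g y \<Longrightarrow> isCont h y \<Longrightarrow> isCont (\<lambda>t. Scurv (f t) (g t) (h t)) y"
  unfolding Scurv_def by (auto intro!: continuous_intros)

lemma eventually_nhds_gt:
  fixes f :: "'a::t2_space \<Rightarrow> real"
  assumes "isCont f y" "c < f y" shows "eventually (\<lambda>z. c < f z) (nhds y)"
  using order_tendstoD(1)[OF assms(1)[unfolded isCont_def tendsto_at_iff_tendsto_nhds] assms(2)] .

lemma continuous_on_if_const:
  "continuous_on A f \<Longrightarrow> continuous_on A g \<Longrightarrow> continuous_on A (\<lambda>z. if P then f z else g z)"
  by (cases P) auto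

lemma continuous_on_vfield: "continuous_on UNIV (vfield w)"
  unfolding vfield_def
  by (intro continuous_on_vec_lambda continuous_on_if_const continuous_intros continuous_on_id)

lemma has_real_derivative_components:
  assumes "(x has_vector_derivative v) F"
  shows "((\<lambda>t. Hc (x t)) has_real_derivative Hc v) F"
    "((\<lambda>t. S1 (x t)) has_real_derivative S1 v) F"
    "((\<lambda>t. S2 (x t)) has_real_derivative S2 v) F"
    "((\<lambda>t. S3 (x t)) has_real_derivative S3 v) F"
    "((\<lambda>t. N1 (x t)) has_real_derivative N1 v) F"
    "((\<lambda>t. N2 (x t)) has_real_derivative N2 v) F"
    "((\<lambda>t. N3 (x t)) has_real_derivative N3 v) F"
  using bounded_linear.has_vector_derivative[OF bounded_linear_vec_nth assms]
  by (auto simp: has_real_derivative_iff_has_vector_derivative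
      Hc_def S1_def S2_def S3_def N1_def N2_def N3_def)

lemma qb_nonneg: "-(1/3) < w \<Longrightarrow> 0 \<le> Omg z \<Longrightarrow> 0 \<le> qb w z"
  unfolding qb_def Sig2_def by (intro add_nonneg_nonneg mult_nonneg_nonneg) auto

lemma qb_ge_shear:
  assumes "-(1/3) < w" "0 \<le> Omg z"
  shows "(S1 z ^ 2 + S2 z ^ 2 + S3 z ^ 2) / 3 \<le> qb w z"
proof -
  have "0 \<le> (1 + 3 * w) / 2 * Omg z" using assms by simp
  then show ?thesis unfolding qb_def Sig2_def by linarith
qed

lemma qb_eq_0D:
  assumes "-(1/3) < w" "0 \<le> Omg z" "qb w z = 0"
  shows "S1 z = 0" "S2 z = 0" "S3 z = 0" "Omg z = 0"
proof -
  have "S1 z ^ 2 + S2 z ^ 2 + S3 z ^ 2 = 0"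
    using qb_ge_shear[OF assms(1,2)] assms(3) by (intro antisym) simp_all
  then show "S1 z = 0" "S2 z = 0" "S3 z = 0"
    by (simp_all add: add_nonneg_eq_0_iff)
  then show "Omg z = 0"
    using assms(1,3) by (simp add: qb_def Sig2_def)
qed

text \<open>Evolution equations of the constrained quantities: on the plane \<open>\<Sigma>\<^sub>1 + \<Sigma>\<^sub>2 + \<Sigma>\<^sub>3 = 0\<close>
  each has the form \<open>g' = a g + f\<close> with \<open>f \<ge> 0\<close>, to which the linear differential inequalities apply.\<close>

lemma shear_sum_vfield:
  "S1 (vfield w z) + S2 (vfield w z) + S3 (vfield w z)
     = (S1 z + S2 z + S3 z) * ((2 - qb w z) * Hc z - Fb z)"
  by (simp add: vfield_components Scurv_def algebra_simps power2_eq_square divide_simps)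

lemma shear_curvature_sum:
  assumes "s1 + s2 + s3 = 0"
  shows "s1 * Scurv n1 n2 n3 + s2 * Scurv n2 n3 n1 + s3 * Scurv n3 n1 n2
    = s1 * n1 ^ 2 + s2 * n2 ^ 2 + s3 * n3 ^ 2 + (n1 * n2 * s3 + n1 * s2 * n3 + s1 * n2 * n3)"
proof -
  have s3: "s3 = - s1 - s2" using assms by linarith
  show ?thesis unfolding Scurv_def s3 by (simp add: power2_eq_square field_simps)
qed

lemma Omg_vfield:
  assumes "S1 z + S2 z + S3 z = 0"
  shows "- (S1 z * S1 (vfield w z) + S2 z * S2 (vfield w z) + S3 z * S3 (vfield w z)) / 3
     - (N1 z * N1 (vfield w z) + N2 z * N2 (vfield w z) + N3 z * N3 (vfield w z)) / 6
     = ((1 + 3 * w) * Hc z - 2 * (qb w z * Hc z + Fb z)) * Omg z"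
proof -
  define \<sigma> where "\<sigma> = S1 z ^ 2 + S2 z ^ 2 + S3 z ^ 2"
  define \<nu> where "\<nu> = N1 z ^ 2 + N2 z ^ 2 + N3 z ^ 2"
  define T where "T = S1 z * N1 z ^ 2 + S2 z * N2 z ^ 2 + S3 z * N3 z ^ 2"
  have "S1 z * S1 (vfield w z) + S2 z * S2 (vfield w z) + S3 z * S3 (vfield w z)
     = \<sigma> * ((2 - qb w z) * Hc z - Fb z) + (S1 z * Scurv (N1 z) (N2 z) (N3 z)
       + S2 z * Scurv (N2 z) (N3 z) (N1 z) + S3 z * Scurv (N3 z) (N1 z) (N2 z))"
    unfolding vfield_components \<sigma>_def by (simp add: algebra_simps power2_eq_square)
  also have "\<dots> = \<sigma> * ((2 - qb w z) * Hc z - Fb z) + T + 6 * Fb z"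
    unfolding shear_curvature_sum[OF assms] T_def Fb_def by simp
  finally have shear: "S1 z * S1 (vfield w z) + S2 z * S2 (vfield w z) + S3 z * S3 (vfield w z)
     = \<sigma> * ((2 - qb w z) * Hc z - Fb z) + T + 6 * Fb z" .
  have curv: "N1 z * N1 (vfield w z) + N2 z * N2 (vfield w z) + N3 z * N3 (vfield w z)
     = - \<nu> * (qb w z * Hc z + Fb z) - 2 * T"
    unfolding vfield_components \<nu>_def T_def by (simp add: algebra_simps power2_eq_square)
  have q: "qb w z = \<sigma> / 3 + (1 + 3 * w) / 2 * Omg z" and \<nu>: "\<nu> = 12 * (1 - \<sigma> / 6 - Omg z)"
    unfolding qb_def Omg_def Sig2_def \<sigma>_def \<nu>_def by simp_all
  show ?thesis unfolding shear curv \<nu> q by (simp add: field_simps)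
qed

lemma Gauss_constraint_vfield:
  assumes "S1 z + S2 z + S3 z = 0"
  shows "2 * Hc z * Hc (vfield w z)
     + (N1 (vfield w z) * N2 z + N1 z * N2 (vfield w z) + N1 (vfield w z) * N3 z
        + N1 z * N3 (vfield w z) + N2 (vfield w z) * N3 z + N2 z * N3 (vfield w z)) / 6
     = - 2 * (qb w z * Hc z + Fb z) * (Hc z ^ 2 + (N1 z * N2 z + N1 z * N3 z + N2 z * N3 z) / 6 - 1)"
proof -
  have S3: "S3 z = - S1 z - S2 z" using assms by linarith
  show ?thesis unfolding vfield_components S3 Fb_def
    by (simp add: algebra_simps power2_eq_square divide_simps)
qed

lemma N_product_vfield:
  assumes "S1 z + S2 z + S3 z = 0"
  shows "N1 (vfield w z) * N2 z * N3 z + N1 z * N2 (vfield w z) * N3 z + N1 z * N2 z * N3 (vfield w z)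
     = - 3 * (qb w z * Hc z + Fb z) * (N1 z * N2 z * N3 z)"
proof -
  have S3: "S3 z = - S1 z - S2 z" using assms by linarith
  show ?thesis unfolding vfield_components S3 by (simp add: algebra_simps)
qed

lemma H_cube_vfield:
  "3 * Hc z ^ 2 * Hc (vfield w z) = - 3 * (qb w z * Hc z + Fb z) * Hc z ^ 3 + 3 * qb w z * Hc z ^ 2"
  by (simp add: vfield_components algebra_simps power2_eq_square power3_eq_cube)

section \<open>Linear differential inequalities\<close>

lemma linear_ode_integrating_factor:
  fixes g a f :: "real \<Rightarrow> real"
  assumes "0 \<le> T" and "continuous_on {0..T} a"
    and g': "\<And>t. 0 \<le> t \<Longrightarrow> t \<le> T \<Longrightarrow> (g has_real_derivative a t * g t + f t) (at t within {0..})"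
    and "\<And>t. 0 \<le> t \<Longrightarrow> t \<le> T \<Longrightarrow> 0 \<le> f t"
  shows "g 0 \<le> g T * exp (- integral {0..T} a)"
proof -
  define E where "E t = exp (- integral {0..t} a)" for t
  have E': "(E has_real_derivative E t * (- a t)) (at t within {0..T})" if "t \<in> {0..T}" for t
    unfolding E_def
    by (auto intro!: derivative_eq_intros integral_has_real_derivative assms(2) that)
  have gE': "((\<lambda>t. g t * E t) has_real_derivative f t * E t) (at t within {0..T})"
    if "t \<in> {0..T}" for t
  proof -
    have "(g has_real_derivative a t * g t + f t) (at t within {0..T})"
      by (rule DERIV_subset[OF g']) (use that in auto)
    then show ?thesis using E'[OF that]
      by (auto intro!: derivative_eq_intros simp: algebra_simps)
  qed
  have "g 0 * E 0 \<le> g T * E T"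
  proof (rule DERIV_nonneg_imp_increasing_open[OF assms(1)])
    show "continuous_on {0..T} (\<lambda>t. g t * E t)"
      using gE' DERIV_continuous continuous_on_eq_continuous_within by blast
    fix t :: real assume "0 < t" "t < T"
    then show "\<exists>y. ((\<lambda>t. g t * E t) has_real_derivative y) (at t) \<and> 0 \<le> y"
      using gE'[of t] at_within_Icc_at[of 0 t T] assms(4)[of t] by (auto simp: E_def)
  qed
  then show ?thesis by (simp add: E_def)
qed

lemma linear_ode_nonneg:
  fixes g a f :: "real \<Rightarrow> real"
  assumes "0 \<le> T" and "continuous_on {0..T} a"
    and "\<And>t. 0 \<le> t \<Longrightarrow> t \<le> T \<Longrightarrow> (g has_real_derivative a t * g t + f t) (at t within {0..})"
    and "\<And>t. 0 \<le> t \<Longrightarrow> t \<le> T \<Longrightarrow> 0 \<le> f t" and "0 \<le> g 0"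
  shows "0 \<le> g T"
proof -
  have "0 \<le> g T * exp (- integral {0..T} a)"
    using linear_ode_integrating_factor[OF assms(1-4)] assms(5) by linarith
  then show ?thesis by (simp add: zero_le_mult_iff)
qed

lemma linear_ode_pos:
  fixes g a :: "real \<Rightarrow> real"
  assumes "0 \<le> T" and "continuous_on {0..T} a"
    and "\<And>t. 0 \<le> t \<Longrightarrow> t \<le> T \<Longrightarrow> (g has_real_derivative a t * g t) (at t within {0..})"
    and "0 < g 0"
  shows "0 < g T"
proof -
  have "0 < g T * exp (- integral {0..T} a)"
    using linear_ode_integrating_factor[OF assms(1,2), of g "\<lambda>_. 0"] assms(3,4) by force
  then show ?thesis by (simp add: zero_less_mult_iff)
qed

lemma linear_ode_zero:
  fixes g a :: "real \<Rightarrow> real"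
  assumes "0 \<le> T" and "continuous_on {0..T} a"
    and g': "\<And>t. 0 \<le> t \<Longrightarrow> t \<le> T \<Longrightarrow> (g has_real_derivative a t * g t) (at t within {0..})"
    and "g 0 = 0"
  shows "g T = 0"
proof -
  have "0 \<le> g T"
    by (rule linear_ode_nonneg[OF assms(1,2), where f="\<lambda>_. 0"]) (use assms(3,4) in auto)
  moreover have "0 \<le> - g T"
    by (rule linear_ode_nonneg[OF assms(1,2), where f="\<lambda>_. 0" and g="\<lambda>t. - g t"])
      (use assms(4) in \<open>auto intro!: derivative_eq_intros g'\<close>)
  ultimately show ?thesis by simp
qed

section \<open>Trajectories starting in Bianchi IX\<close>

locale B_IX_trajectory =
  fixes w :: real and x :: "real \<Rightarrow> real^7"
  assumes w_gt: "-(1/3) < w"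
    and initial: "x 0 \<in> B_IX"
    and ode: "\<And>t. 0 \<le> t \<Longrightarrow> (x has_vector_derivative vfield w (x t)) (at t within {0..})"
begin

lemma continuous_on_trajectory: "continuous_on {0..} x"
  by (rule continuous_on_vector_derivative) (use ode in auto)

lemma continuous_on_along:
  "continuous_on UNIV f \<Longrightarrow> continuous_on {0..T} (\<lambda>t. f (x t))"
  by (rule continuous_on_compose2[OF _ continuous_on_subset[OF continuous_on_trajectory]]) auto

lemmas component_derivatives = has_real_derivative_components[OF ode]

lemma initial_state:
  "admissible (x 0)" "0 < N1 (x 0)" "0 < N2 (x 0)" "0 < N3 (x 0)" "0 < Hc (x 0)"
  using initial by (auto simp: B_IX_def)

lemma shear_sum_zero:
  assumes "0 \<le> t" shows "S1 (x t) + S2 (x t) + S3 (x t) = 0"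
proof (rule linear_ode_zero[OF assms])
  show "continuous_on {0..t} (\<lambda>t. (2 - qb w (x t)) * Hc (x t) - Fb (x t))"
    by (intro continuous_on_along continuous_intros)
  fix s :: real assume s: "0 \<le> s" "s \<le> t"
  have "((\<lambda>t. S1 (x t) + S2 (x t) + S3 (x t)) has_real_derivative
      S1 (vfield w (x s)) + S2 (vfield w (x s)) + S3 (vfield w (x s))) (at s within {0..})"
    by (intro derivative_intros component_derivatives s(1))
  then show "((\<lambda>t. S1 (x t) + S2 (x t) + S3 (x t)) has_real_derivative
      ((2 - qb w (x s)) * Hc (x s) - Fb (x s)) * (S1 (x s) + S2 (x s) + S3 (x s))) (at s within {0..})"
    by (rule DERIV_cong) (simp add: shear_sum_vfield)
qed (use initial_state in \<open>simp add: admissible_def\<close>)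

lemma Omg_nonneg:
  assumes "0 \<le> t" shows "0 \<le> Omg (x t)"
proof (rule linear_ode_nonneg[OF assms, where f = "\<lambda>_. 0"])
  show "continuous_on {0..t} (\<lambda>t. (1 + 3 * w) * Hc (x t) - 2 * (qb w (x t) * Hc (x t) + Fb (x t)))"
    by (intro continuous_on_along continuous_intros)
  fix s :: real assume s: "0 \<le> s" "s \<le> t"
  have "((\<lambda>t. Omg (x t)) has_real_derivative
      - (S1 (x s) * S1 (vfield w (x s)) + S2 (x s) * S2 (vfield w (x s)) + S3 (x s) * S3 (vfield w (x s))) / 3
      - (N1 (x s) * N1 (vfield w (x s)) + N2 (x s) * N2 (vfield w (x s)) + N3 (x s) * N3 (vfield w (x s))) / 6)
      (at s within {0..})"
    unfolding Omg_def Sig2_def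
    by (auto intro!: derivative_eq_intros component_derivatives s(1) simp: field_simps)
  then show "((\<lambda>t. Omg (x t)) has_real_derivative
      ((1 + 3 * w) * Hc (x s) - 2 * (qb w (x s) * Hc (x s) + Fb (x s))) * Omg (x s) + 0) (at s within {0..})"
    by (rule DERIV_cong) (use Omg_vfield[OF shear_sum_zero[OF s(1)], of w] in linarith)
qed (use initial_state in \<open>simp_all add: admissible_def\<close>)

lemma Gauss_constraint:
  assumes "0 \<le> t"
  shows "Hc (x t) ^ 2 + (N1 (x t) * N2 (x t) + N1 (x t) * N3 (x t) + N2 (x t) * N3 (x t)) / 6 = 1"
proof -
  let ?C = "\<lambda>t. Hc (x t) ^ 2 + (N1 (x t) * N2 (x t) + N1 (x t) * N3 (x t) + N2 (x t) * N3 (x t)) / 6 - 1"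
  have "?C t = 0"
  proof (rule linear_ode_zero[OF assms])
    show "continuous_on {0..t} (\<lambda>t. - 2 * (qb w (x t) * Hc (x t) + Fb (x t)))"
      by (intro continuous_on_along continuous_intros)
    fix s :: real assume s: "0 \<le> s" "s \<le> t"
    have "(?C has_real_derivative 2 * Hc (x s) * Hc (vfield w (x s))
       + (N1 (vfield w (x s)) * N2 (x s) + N1 (x s) * N2 (vfield w (x s))
          + N1 (vfield w (x s)) * N3 (x s) + N1 (x s) * N3 (vfield w (x s))
          + N2 (vfield w (x s)) * N3 (x s) + N2 (x s) * N3 (vfield w (x s))) / 6) (at s within {0..})"
      by (auto intro!: derivative_eq_intros component_derivatives s(1) simp: field_simps)
    then show "(?C has_real_derivative - 2 * (qb w (x s) * Hc (x s) + Fb (x s)) * ?C s) (at s within {0..})"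
      by (rule DERIV_cong) (simp add: Gauss_constraint_vfield shear_sum_zero s(1))
  qed (use initial_state in \<open>simp add: admissible_def\<close>)
  then show ?thesis by simp
qed

lemma N_pos:
  assumes "0 \<le> t" shows "0 < N1 (x t)" "0 < N2 (x t)" "0 < N3 (x t)"
proof -
  have rate: "continuous_on {0..t} (\<lambda>t. - (qb w (x t) * Hc (x t) + 2 * S (x t) + Fb (x t)))"
    if "continuous_on UNIV S" for S
    by (intro continuous_on_along continuous_intros that)
  show "0 < N1 (x t)"
    by (rule linear_ode_pos[OF assms rate, of S1])
      (auto intro: DERIV_cong[OF component_derivatives(5)] continuous_intros
        simp: vfield_components initial_state algebra_simps)
  show "0 < N2 (x t)"
    by (rule linear_ode_pos[OF assms rate, of S2])
      (auto intro: DERIV_cong[OF component_derivatives(6)] continuous_intros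
        simp: vfield_components initial_state algebra_simps)
  show "0 < N3 (x t)"
    by (rule linear_ode_pos[OF assms rate, of S3])
      (auto intro: DERIV_cong[OF component_derivatives(7)] continuous_intros
        simp: vfield_components initial_state algebra_simps)
qed

lemma N_product_derivative:
  assumes "0 \<le> t"
  shows "((\<lambda>t. N1 (x t) * N2 (x t) * N3 (x t)) has_real_derivative
      - 3 * (qb w (x t) * Hc (x t) + Fb (x t)) * (N1 (x t) * N2 (x t) * N3 (x t))) (at t within {0..})"
proof -
  have "((\<lambda>t. N1 (x t) * N2 (x t) * N3 (x t)) has_real_derivative
      N1 (vfield w (x t)) * N2 (x t) * N3 (x t) + N1 (x t) * N2 (vfield w (x t)) * N3 (x t)
      + N1 (x t) * N2 (x t) * N3 (vfield w (x t))) (at t within {0..})"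
    by (auto intro!: derivative_eq_intros component_derivatives assms simp: algebra_simps)
  then show ?thesis
    by (rule DERIV_cong) (rule N_product_vfield[OF shear_sum_zero[OF assms]])
qed

lemma H_cube_derivative:
  assumes "0 \<le> t"
  shows "((\<lambda>t. Hc (x t) ^ 3) has_real_derivative
      - 3 * (qb w (x t) * Hc (x t) + Fb (x t)) * Hc (x t) ^ 3 + 3 * qb w (x t) * Hc (x t) ^ 2)
      (at t within {0..})"
proof -
  have "((\<lambda>t. Hc (x t) ^ 3) has_real_derivative 3 * Hc (x t) ^ 2 * Hc (vfield w (x t))) (at t within {0..})"
    by (auto intro!: derivative_eq_intros component_derivatives assms)
  then show ?thesis by (rule DERIV_cong) (rule H_cube_vfield)
qed

text \<open>The ratio of \<open>N\<^sub>1N\<^sub>2N\<^sub>3\<close> and \<open>H\<^sup>3\<close> cannot increase, since both decay at the rate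
  \<open>3(qH + F)\<close> and \<open>H\<^sup>3\<close> has the extra source \<open>3qH\<^sup>2 \<ge> 0\<close>; this keeps \<open>H\<close> away from zero.\<close>
lemma H_cube_dominates_N_product:
  obtains k where "0 < k" "\<And>t. 0 \<le> t \<Longrightarrow> k * (N1 (x t) * N2 (x t) * N3 (x t)) \<le> Hc (x t) ^ 3"
proof -
  define k where "k = Hc (x 0) ^ 3 / (N1 (x 0) * N2 (x 0) * N3 (x 0))"
  have "0 \<le> Hc (x t) ^ 3 - k * (N1 (x t) * N2 (x t) * N3 (x t))" if t: "0 \<le> t" for t
  proof (rule linear_ode_nonneg[OF t, where f = "\<lambda>t. 3 * qb w (x t) * Hc (x t) ^ 2"])
    show "continuous_on {0..t} (\<lambda>t. - 3 * (qb w (x t) * Hc (x t) + Fb (x t)))"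
      by (intro continuous_on_along continuous_intros)
    fix s :: real assume s: "0 \<le> s" "s \<le> t"
    show "((\<lambda>t. Hc (x t) ^ 3 - k * (N1 (x t) * N2 (x t) * N3 (x t))) has_real_derivative
        - 3 * (qb w (x s) * Hc (x s) + Fb (x s)) * (Hc (x s) ^ 3 - k * (N1 (x s) * N2 (x s) * N3 (x s)))
        + 3 * qb w (x s) * Hc (x s) ^ 2) (at s within {0..})"
      by (rule DERIV_cong[OF DERIV_diff[OF H_cube_derivative[OF s(1)] DERIV_cmult[OF N_product_derivative[OF s(1)]]]])
        (simp add: algebra_simps)
    show "0 \<le> 3 * qb w (x s) * Hc (x s) ^ 2"
      using qb_nonneg[OF w_gt Omg_nonneg[OF s(1)]] by simp
  qed (use initial_state in \<open>simp add: k_def\<close>)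
  moreover have "0 < k" using initial_state by (simp add: k_def)
  ultimately show ?thesis using that by simp
qed

lemma H_pos: assumes "0 \<le> t" shows "0 < Hc (x t)"
proof -
  obtain k where k: "0 < k" "\<And>t. 0 \<le> t \<Longrightarrow> k * (N1 (x t) * N2 (x t) * N3 (x t)) \<le> Hc (x t) ^ 3"
    using H_cube_dominates_N_product by blast
  have "0 < k * (N1 (x t) * N2 (x t) * N3 (x t))" using N_pos[OF assms] k(1) by simp
  with k(2)[OF assms] have "0 < Hc (x t) ^ 3" by linarith
  then show ?thesis by (simp add: zero_less_power_eq)
qed

lemma trajectory_in_B_IX: "0 \<le> t \<Longrightarrow> x t \<in> B_IX"
  using shear_sum_zero Gauss_constraint Omg_nonneg N_pos H_pos
  by (simp add: B_IX_def admissible_def)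

end

section \<open>A compact region containing the trajectories\<close>

lemma UNIV_7: "(UNIV :: 7 set) = {0, 1, 2, 3, 4, 5, 6}"
proof -
  have "i \<in> {0, 1, 2, 3, 4, 5, 6}" for i :: 7
  proof (induct i)
    case (of_int z)
    then have "z = 0 \<or> z = 1 \<or> z = 2 \<or> z = 3 \<or> z = 4 \<or> z = 5 \<or> z = 6" by fastforce
    then show ?case by auto
  qed
  then show ?thesis by blast
qed

lemma norm_state:
  "norm z = sqrt (Hc z ^ 2 + S1 z ^ 2 + S2 z ^ 2 + S3 z ^ 2 + N1 z ^ 2 + N2 z ^ 2 + N3 z ^ 2)"
  unfolding norm_vec_def L2_set_def UNIV_7
  by (simp add: Hc_def S1_def S2_def S3_def N1_def N2_def N3_def algebra_simps)

definition admissible_nonneg :: "(real^7) set" where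
  "admissible_nonneg = {z. admissible z \<and> 0 \<le> N1 z \<and> 0 \<le> N2 z \<and> 0 \<le> N3 z \<and> 0 \<le> Hc z}"

lemma B_IX_subset_admissible_nonneg: "B_IX \<subseteq> admissible_nonneg"
  by (auto simp: B_IX_def admissible_nonneg_def)

lemma norm_le_admissible_nonneg:
  assumes "z \<in> admissible_nonneg" shows "norm z \<le> 5"
proof -
  have adm: "admissible z" and N: "0 \<le> N1 z" "0 \<le> N2 z" "0 \<le> N3 z"
    using assms by (auto simp: admissible_nonneg_def)
  have "0 \<le> (N1 z * N2 z + N1 z * N3 z + N2 z * N3 z) / 6" using N by simp
  moreover have "Hc z ^ 2 + (N1 z * N2 z + N1 z * N3 z + N2 z * N3 z) / 6 = 1"
    using adm by (simp add: admissible_def)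
  ultimately have H: "Hc z ^ 2 \<le> 1" by linarith
  have bounds: "A \<le> 6 \<and> B \<le> 12" if "0 \<le> 1 - A / 6 - B / 12" "0 \<le> A" "0 \<le> B" for A B :: real
    using that by linarith
  have "S1 z ^ 2 + S2 z ^ 2 + S3 z ^ 2 \<le> 6 \<and> N1 z ^ 2 + N2 z ^ 2 + N3 z ^ 2 \<le> 12"
    by (rule bounds) (use adm in \<open>simp_all add: admissible_def Omg_def Sig2_def\<close>)
  moreover have sum_bound: "h + a1 + a2 + a3 + b1 + b2 + b3 \<le> 25"
    if "h \<le> 1" "a1 + a2 + a3 \<le> 6 \<and> b1 + b2 + b3 \<le> 12" for h a1 a2 a3 b1 b2 b3 :: real
    using that by linarith
  ultimately have "norm z \<le> sqrt 25"
    unfolding norm_state using H by (intro real_sqrt_le_mono) blast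
  then show ?thesis by simp
qed

lemma compact_admissible_nonneg: "compact admissible_nonneg"
  unfolding compact_eq_bounded_closed
proof
  show "bounded admissible_nonneg"
    using norm_le_admissible_nonneg by (auto simp: bounded_iff)
  have "admissible_nonneg = {z. S1 z + S2 z + S3 z = 0}
      \<inter> {z. Hc z ^ 2 + (N1 z * N2 z + N1 z * N3 z + N2 z * N3 z) / 6 = 1}
      \<inter> {z. 0 \<le> Omg z} \<inter> {z. 0 \<le> N1 z} \<inter> {z. 0 \<le> N2 z} \<inter> {z. 0 \<le> N3 z} \<inter> {z. 0 \<le> Hc z}"
    by (auto simp: admissible_nonneg_def admissible_def)
  also have "closed \<dots>"
    by (intro closed_Int closed_Collect_eq closed_Collect_le) (auto intro!: continuous_intros)
  finally show "closed admissible_nonneg" .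
qed

context B_IX_trajectory
begin

lemma trajectory_in_admissible_nonneg: "0 \<le> t \<Longrightarrow> x t \<in> admissible_nonneg"
  using trajectory_in_B_IX B_IX_subset_admissible_nonneg by blast

lemma at_within_nonneg: "0 < t \<Longrightarrow> at (t::real) within {0..} = at t"
  by (rule at_within_interior) simp

lemma trajectory_lipschitz:
  obtains B where "0 < B" "\<And>a b. 0 \<le> a \<Longrightarrow> a \<le> b \<Longrightarrow> norm (x b - x a) \<le> B * (b - a)"
proof -
  have "compact (vfield w ` admissible_nonneg)"
    by (intro compact_continuous_image continuous_on_subset[OF continuous_on_vfield]
        compact_admissible_nonneg) simp
  then obtain B where B: "0 < B" "\<And>z. z \<in> admissible_nonneg \<Longrightarrow> norm (vfield w z) \<le> B"
    by (metis compact_imp_bounded bounded_pos imageI)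
  have "norm (x b - x a) \<le> B * (b - a)" if ab: "0 \<le> a" "a < b" for a b
  proof -
    obtain t where t: "a < t" "t < b" "norm (x b - x a) \<le> norm ((b - a) *\<^sub>R vfield w (x t))"
    proof (rule mvt_general[OF ab(2), of x "\<lambda>t h. h *\<^sub>R vfield w (x t)", THEN bexE])
      show "continuous_on {a..b} x"
        by (rule continuous_on_subset[OF continuous_on_trajectory]) (use ab in auto)
      fix t assume "a < t" "t < b"
      then show "(x has_derivative (\<lambda>h. h *\<^sub>R vfield w (x t))) (at t)"
        using ode[of t] ab at_within_nonneg[of t] by (simp add: has_vector_derivative_def)
    qed auto
    have "norm (vfield w (x t)) \<le> B"
      using B(2) trajectory_in_admissible_nonneg t ab by simp
    then have "(b - a) * norm (vfield w (x t)) \<le> B * (b - a)"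
      using ab mult_left_mono[of _ B "b - a"] by (simp add: mult.commute)
    moreover have "norm ((b - a) *\<^sub>R vfield w (x t)) = (b - a) * norm (vfield w (x t))"
      using ab by simp
    ultimately show ?thesis using t(3) by linarith
  qed
  then show ?thesis using that B(1) by (metis diff_self mult_zero_right norm_zero order.order_iff_strict)
qed

end

lemma omega_limit_subsequence:
  fixes x :: "real \<Rightarrow> 'a::metric_space"
  assumes "compact K" "\<And>t. 0 \<le> t \<Longrightarrow> x t \<in> K" "filterlim s at_top sequentially"
  obtains r y where "strict_mono r" "y \<in> omega_limit x" "y \<in> K"
    "((\<lambda>n. x (s (r n))) \<longlongrightarrow> y) sequentially"
proof -
  have "\<forall>n. x (max 0 (s n)) \<in> K" using assms(2) by simp
  then obtain y r where y: "y \<in> K" "strict_mono r" "((\<lambda>n. x (max 0 (s n))) \<circ> r) \<longlonglongrightarrow> y"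
    using seq_compactE[OF compact_imp_seq_compact[OF assms(1)]] by metis
  have sr: "filterlim (\<lambda>n. s (r n)) at_top sequentially"
    using filterlim_compose[OF assms(3) filterlim_subseq[OF y(2)]] by (simp add: o_def)
  then have "eventually (\<lambda>n. x (max 0 (s (r n))) = x (s (r n))) sequentially"
    unfolding filterlim_at_top by (auto elim!: allE[of _ 0] eventually_mono)
  then have lim: "((\<lambda>n. x (s (r n))) \<longlongrightarrow> y) sequentially"
    using y(3) by (simp add: o_def tendsto_cong)
  then have "y \<in> omega_limit x" unfolding omega_limit_def using sr by blast
  then show ?thesis using that y lim by blast
qed

lemma omega_limit_nonempty:
  fixes x :: "real \<Rightarrow> 'a::metric_space"
  assumes "compact K" "\<And>t. 0 \<le> t \<Longrightarrow> x t \<in> K"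
  shows "omega_limit x \<noteq> {}"
proof -
  obtain r y where "strict_mono r" "y \<in> omega_limit x" "y \<in> K"
    "((\<lambda>n. x (real (r n))) \<longlongrightarrow> y) sequentially"
    by (rule omega_limit_subsequence[OF assms filterlim_real_sequentially])
  then show ?thesis by blast
qed

lemma omega_limit_subset:
  fixes x :: "real \<Rightarrow> 'a::metric_space"
  assumes "closed K" "\<And>t. 0 \<le> t \<Longrightarrow> x t \<in> K"
  shows "omega_limit x \<subseteq> K"
proof
  fix y assume "y \<in> omega_limit x"
  then obtain s where s: "filterlim s at_top sequentially" "((\<lambda>n. x (s n)) \<longlongrightarrow> y) sequentially"
    by (auto simp: omega_limit_def)
  have "eventually (\<lambda>n. x (s n) \<in> K) sequentially"
    using s(1) assms(2) unfolding filterlim_at_top by (auto elim!: allE[of _ 0] eventually_mono)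
  then show "y \<in> K" using Lim_in_closed_set[OF assms(1) _ _ s(2)] by simp
qed

section \<open>A Lyapunov function\<close>

definition lyapunov :: "real^7 \<Rightarrow> real" where
  "lyapunov z = N1 z * N2 z * N3 z / Hc z ^ 3"

definition lyapunov_rate :: "real \<Rightarrow> real^7 \<Rightarrow> real" where
  "lyapunov_rate w z = 3 * qb w z * (N1 z * N2 z * N3 z) / Hc z ^ 4"

lemma lyapunov_rate_nonneg:
  assumes "-(1/3) < w" "z \<in> admissible_nonneg" shows "0 \<le> lyapunov_rate w z"
proof -
  have "0 \<le> qb w z" "0 \<le> N1 z * N2 z * N3 z"
    using assms qb_nonneg by (auto simp: admissible_nonneg_def admissible_def)
  then show ?thesis unfolding lyapunov_rate_def by simp
qed

context B_IX_trajectory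
begin

lemma lyapunov_derivative:
  assumes "0 < t"
  shows "((\<lambda>t. lyapunov (x t)) has_real_derivative - lyapunov_rate w (x t)) (at t)"
proof -
  have H: "0 < Hc (x t)" using H_pos assms by simp
  have "((\<lambda>t. lyapunov (x t)) has_real_derivative - lyapunov_rate w (x t)) (at t within {0..})"
    unfolding lyapunov_def
    by (rule DERIV_cong[OF DERIV_divide[OF N_product_derivative H_cube_derivative]])
      (use assms H in \<open>auto simp: lyapunov_rate_def field_simps eval_nat_numeral\<close>)
  then show ?thesis using at_within_nonneg[OF assms] by simp
qed

lemma lyapunov_antimono:
  assumes "0 < a" "a \<le> b" shows "lyapunov (x b) \<le> lyapunov (x a)"
proof (rule DERIV_nonpos_imp_nonincreasing[OF assms(2)])
  fix t assume "a \<le> t" "t \<le> b"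
  then show "\<exists>y. ((\<lambda>t. lyapunov (x t)) has_real_derivative y) (at t) \<and> y \<le> 0"
    using assms lyapunov_derivative[of t] lyapunov_rate_nonneg[OF w_gt trajectory_in_admissible_nonneg, of t]
    by force
qed

lemma omega_limit_in_admissible_nonneg: "omega_limit x \<subseteq> admissible_nonneg"
  by (rule omega_limit_subset[OF compact_imp_closed[OF compact_admissible_nonneg]])
    (rule trajectory_in_admissible_nonneg)

lemma omega_limit_H_pos:
  assumes "y \<in> omega_limit x" "0 < N1 y" "0 < N2 y" "0 < N3 y"
  shows "0 < Hc y"
proof -
  obtain s where s: "filterlim s at_top sequentially" "((\<lambda>n. x (s n)) \<longlongrightarrow> y) sequentially"
    using assms(1) by (auto simp: omega_limit_def)
  obtain k where k: "0 < k" "\<And>t. 0 \<le> t \<Longrightarrow> k * (N1 (x t) * N2 (x t) * N3 (x t)) \<le> Hc (x t) ^ 3"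
    using H_cube_dominates_N_product by blast
  have "eventually (\<lambda>n. 0 \<le> Hc (x (s n)) ^ 3 - k * (N1 (x (s n)) * N2 (x (s n)) * N3 (x (s n)))) sequentially"
    using s(1) k(2) unfolding filterlim_at_top by (auto elim!: allE[of _ 0] eventually_mono)
  moreover have "((\<lambda>n. Hc (x (s n)) ^ 3 - k * (N1 (x (s n)) * N2 (x (s n)) * N3 (x (s n))))
      \<longlongrightarrow> Hc y ^ 3 - k * (N1 y * N2 y * N3 y)) sequentially"
    by (intro tendsto_intros isCont_tendsto_compose[OF _ s(2)] continuous_intros continuous_ident)
  ultimately have "0 \<le> Hc y ^ 3 - k * (N1 y * N2 y * N3 y)"
    using tendsto_lowerbound by fastforce
  moreover have "0 < k * (N1 y * N2 y * N3 y)" using k(1) assms(2-4) by simp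
  ultimately have "0 < Hc y ^ 3" by linarith
  then show ?thesis by (simp add: zero_less_power_eq)
qed

section \<open>No uniform descent near omega-limit points\<close>

lemma omega_limit_lyapunov:
  assumes s: "filterlim s at_top sequentially" "((\<lambda>n. x (s n)) \<longlongrightarrow> y) sequentially"
    and N: "0 < N1 y" "0 < N2 y" "0 < N3 y"
  shows "((\<lambda>n. lyapunov (x (s n))) \<longlongrightarrow> lyapunov y) sequentially"
    and "\<And>t. 0 < t \<Longrightarrow> lyapunov y \<le> lyapunov (x t)"
proof -
  have "y \<in> omega_limit x" using s unfolding omega_limit_def by blast
  then have "Hc y \<noteq> 0" using omega_limit_H_pos N by force
  then have "isCont lyapunov y"
    unfolding lyapunov_def by (intro continuous_intros continuous_ident) auto
  then show lim: "((\<lambda>n. lyapunov (x (s n))) \<longlongrightarrow> lyapunov y) sequentially"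
    by (rule isCont_tendsto_compose[OF _ s(2)])
  fix t :: real assume "0 < t"
  have "eventually (\<lambda>n. t \<le> s n) sequentially"
    using s(1) by (simp add: filterlim_at_top)
  then have "eventually (\<lambda>n. lyapunov (x (s n)) \<le> lyapunov (x t)) sequentially"
    by eventually_elim (rule lyapunov_antimono[OF \<open>0 < t\<close>])
  then show "lyapunov y \<le> lyapunov (x t)"
    using lim by (metis tendsto_upperbound trivial_limit_sequentially)
qed

text \<open>Near a limit point the trajectory stays, for a fixed time \<open>\<delta>\<close>, in any given neighbourhood
  (the vector field is bounded), so a uniform bound on a derivative yields a uniform decrease.\<close>
lemma window_descent:
  assumes s: "filterlim s at_top sequentially" "((\<lambda>n. x (s n)) \<longlongrightarrow> y) sequentially"
    and "0 < c" and Q: "eventually Q (nhds y)"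
    and g': "\<And>t. 0 < t \<Longrightarrow> Q (x t) \<Longrightarrow> \<exists>D. (g has_real_derivative D) (at t) \<and> D \<le> - c"
  obtains \<delta> where "0 < \<delta>"
    "eventually (\<lambda>n. 0 < s n \<and> g (s n + \<delta>) \<le> g (s n) - \<delta> * c \<and> Q (x (s n + \<delta>))) sequentially"
proof -
  obtain r where r: "0 < r" "\<And>z. dist z y < r \<Longrightarrow> Q z"
    using Q by (auto simp: eventually_nhds_metric)
  obtain B where B: "0 < B" "\<And>a b. 0 \<le> a \<Longrightarrow> a \<le> b \<Longrightarrow> norm (x b - x a) \<le> B * (b - a)"
    using trajectory_lipschitz by blast
  define \<delta> where "\<delta> = r / (2 * B)"
  have \<delta>: "0 < \<delta>" "B * \<delta> = r / 2" using r B by (auto simp: \<delta>_def)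
  have "eventually (\<lambda>n. 0 < s n) sequentially"
    using s(1) by (simp add: filterlim_at_top_dense)
  moreover have "eventually (\<lambda>n. dist (x (s n)) y < r / 2) sequentially"
    using tendsto_iff[THEN iffD1, OF s(2), rule_format, of "r / 2"] r(1) by simp
  ultimately have "eventually (\<lambda>n. 0 < s n \<and> g (s n + \<delta>) \<le> g (s n) - \<delta> * c \<and> Q (x (s n + \<delta>))) sequentially"
  proof eventually_elim
    case (elim n)
    have close: "Q (x t)" if "s n \<le> t" "t \<le> s n + \<delta>" for t
    proof (rule r(2))
      have "norm (x t - x (s n)) \<le> B * (t - s n)" using B(2) that elim(1) by simp
      also have "\<dots> \<le> B * \<delta>" using B(1) that by simp
      finally have "dist (x t) (x (s n)) \<le> B * \<delta>" by (simp add: dist_norm)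
      then show "dist (x t) y < r"
        using elim(2) \<delta>(2) dist_triangle[of "x t" y "x (s n)"] by linarith
    qed
    have "g (s n + \<delta>) + c * (s n + \<delta>) \<le> g (s n) + c * s n"
    proof (rule DERIV_nonpos_imp_nonincreasing[where f = "\<lambda>t. g t + c * t"])
      fix t assume t: "s n \<le> t" "t \<le> s n + \<delta>"
      moreover have "0 < t" using t elim(1) by linarith
      ultimately obtain D where "(g has_real_derivative D) (at t)" "D \<le> - c"
        using g' close by blast
      then show "\<exists>d. ((\<lambda>t. g t + c * t) has_real_derivative d) (at t) \<and> d \<le> 0"
        by (intro exI[of _ "D + c"]) (auto intro!: derivative_eq_intros)
    qed (use \<delta> in simp)
    then show ?case using elim(1) close[of "s n + \<delta>"] \<delta>(1) by (simp add: algebra_simps)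
  qed
  with \<delta>(1) that show ?thesis by blast
qed

lemma omega_limit_interior_subsequence:
  assumes s: "filterlim s at_top sequentially" and "0 < m"
    and Q: "eventually (\<lambda>n. Q (x (s n))) sequentially" "\<And>z. Q z \<Longrightarrow> m \<le> N1 z \<and> m \<le> N2 z \<and> m \<le> N3 z"
  obtains r y where "strict_mono r" "y \<in> omega_limit x" "0 < N1 y" "0 < N2 y" "0 < N3 y"
    "((\<lambda>n. x (s (r n))) \<longlongrightarrow> y) sequentially"
proof -
  obtain r y where r: "strict_mono r" "y \<in> omega_limit x" "y \<in> admissible_nonneg"
    and lim: "((\<lambda>n. x (s (r n))) \<longlongrightarrow> y) sequentially"
    by (rule omega_limit_subsequence[OF compact_admissible_nonneg trajectory_in_admissible_nonneg s])
  have ev: "eventually (\<lambda>n. Q (x (s (r n)))) sequentially"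
    using Q(1) filterlim_subseq[OF r(1)] by (rule eventually_compose_filterlim)
  have lower: "m \<le> f y" if "isCont f y" "\<And>z. Q z \<Longrightarrow> m \<le> f z" for f
    using tendsto_lowerbound[OF isCont_tendsto_compose[OF that(1) lim] eventually_mono[OF ev that(2)]]
    by simp
  have "m \<le> N1 y" "m \<le> N2 y" "m \<le> N3 y"
    by (rule lower, simp add: continuous_intros, use Q(2) in blast)+
  with \<open>0 < m\<close> r lim that show ?thesis by simp
qed

text \<open>The Lyapunov function decreases to its value at \<open>y\<close> along the trajectory, so it cannot drop by a
  fixed amount over windows of fixed length accumulating at \<open>y\<close>. This survives a correction \<open>P\<close>
  that vanishes at the limit points where all \<open>N\<^sub>\<alpha>\<close> are positive.\<close>
lemma omega_limit_no_uniform_descent: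
  assumes s: "filterlim s at_top sequentially" "((\<lambda>n. x (s n)) \<longlongrightarrow> y) sequentially"
    and P: "continuous_on UNIV P"
      "\<And>y'. y' \<in> omega_limit x \<Longrightarrow> 0 < N1 y' \<Longrightarrow> 0 < N2 y' \<Longrightarrow> 0 < N3 y' \<Longrightarrow> P y' = 0"
    and "0 < c" and "0 < m" and Q: "eventually Q (nhds y)"
      "\<And>z. Q z \<Longrightarrow> m \<le> N1 z \<and> m \<le> N2 z \<and> m \<le> N3 z"
    and g': "\<And>t. 0 < t \<Longrightarrow> Q (x t) \<Longrightarrow>
      \<exists>D. ((\<lambda>t. lyapunov (x t) - P (x t)) has_real_derivative D) (at t) \<and> D \<le> - c"
  shows False
proof -
  have Ny: "0 < N1 y" "0 < N2 y" "0 < N3 y"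
    using Q(2)[OF eventually_nhds_x_imp_x[OF Q(1)]] \<open>0 < m\<close> by auto
  obtain \<delta> where \<delta>: "0 < \<delta>" and descent:
    "eventually (\<lambda>n. 0 < s n \<and> lyapunov (x (s n + \<delta>)) - P (x (s n + \<delta>))
        \<le> lyapunov (x (s n)) - P (x (s n)) - \<delta> * c \<and> Q (x (s n + \<delta>))) sequentially"
    by (rule window_descent[OF s \<open>0 < c\<close> Q(1) g'])
  have shifted: "filterlim (\<lambda>n. s n + \<delta>) at_top sequentially"
    using filterlim_tendsto_add_at_top[OF tendsto_const s(1), of \<delta>] by (simp add: add.commute)
  have "eventually (\<lambda>n. Q (x (s n + \<delta>))) sequentially"
    using descent by eventually_elim blast
  then obtain r y' where r: "strict_mono r"
    and y': "y' \<in> omega_limit x" "0 < N1 y'" "0 < N2 y'" "0 < N3 y'"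
    and lim': "((\<lambda>n. x (s (r n) + \<delta>)) \<longlongrightarrow> y') sequentially"
    by (rule omega_limit_interior_subsequence[OF shifted \<open>0 < m\<close> _ Q(2)])
  have "P y' = 0" by (rule P(2)[OF y'])
  moreover have "P y = 0" using P(2) Ny s unfolding omega_limit_def by blast
  ultimately have limits:
    "((\<lambda>n. P (x (s (r n) + \<delta>))) \<longlongrightarrow> 0) sequentially"
    "((\<lambda>n. P (x (s (r n)))) \<longlongrightarrow> 0) sequentially"
    "((\<lambda>n. lyapunov (x (s (r n)))) \<longlongrightarrow> lyapunov y) sequentially"
    using isCont_tendsto_compose[OF _ lim', of P] LIMSEQ_subseq_LIMSEQ[OF s(2) r]
      isCont_tendsto_compose[of y P "\<lambda>n. x (s (r n))"] P(1)
      omega_limit_lyapunov(1)[OF filterlim_compose[OF s(1) filterlim_subseq[OF r]] _ Ny]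
    by (auto simp: o_def continuous_on_eq_continuous_at)
  have "eventually (\<lambda>n. lyapunov y + \<delta> * c \<le>
      lyapunov (x (s (r n))) - P (x (s (r n))) + P (x (s (r n) + \<delta>))) sequentially"
    using descent filterlim_subseq[OF r]
  proof (rule eventually_compose_filterlim[THEN eventually_mono])
    fix n assume n: "0 < s (r n) \<and> lyapunov (x (s (r n) + \<delta>)) - P (x (s (r n) + \<delta>))
        \<le> lyapunov (x (s (r n))) - P (x (s (r n))) - \<delta> * c \<and> Q (x (s (r n) + \<delta>))"
    then have "lyapunov y \<le> lyapunov (x (s (r n) + \<delta>))"
      using omega_limit_lyapunov(2)[OF s Ny] \<delta> by simp
    then show "lyapunov y + \<delta> * c \<le> lyapunov (x (s (r n))) - P (x (s (r n))) + P (x (s (r n) + \<delta>))"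
      using n by linarith
  qed
  then have "lyapunov y + \<delta> * c \<le> lyapunov y - 0 + 0"
    by (rule tendsto_lowerbound[OF tendsto_add[OF tendsto_diff[OF limits(3,2)] limits(1)]]) simp
  then show False using mult_pos_pos[OF \<delta> \<open>0 < c\<close>] by linarith
qed

lemma omega_limit_qb_zero:
  assumes "y \<in> omega_limit x" "0 < N1 y" "0 < N2 y" "0 < N3 y"
  shows "qb w y = 0"
proof (rule ccontr)
  assume "qb w y \<noteq> 0"
  moreover have "0 \<le> qb w y"
    using omega_limit_in_admissible_nonneg assms(1) qb_nonneg[OF w_gt]
    by (auto simp: admissible_nonneg_def admissible_def)
  ultimately have rate: "0 < lyapunov_rate w y"
    using omega_limit_H_pos[OF assms] assms(2-4) by (simp add: lyapunov_rate_def)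
  obtain s where s: "filterlim s at_top sequentially" "((\<lambda>n. x (s n)) \<longlongrightarrow> y) sequentially"
    using assms(1) by (auto simp: omega_limit_def)
  define m where "m = Min {N1 y, N2 y, N3 y} / 2"
  have "0 < m" using assms(2-4) by (simp add: m_def)
  let ?Q = "\<lambda>z. lyapunov_rate w y / 2 < lyapunov_rate w z \<and> m < N1 z \<and> m < N2 z \<and> m < N3 z"
  have "isCont (lyapunov_rate w) y"
    using omega_limit_H_pos[OF assms] unfolding lyapunov_rate_def
    by (intro continuous_intros continuous_ident) auto
  then have Q: "eventually ?Q (nhds y)"
    using rate \<open>0 < m\<close> assms(2-4)
    by (intro eventually_conj eventually_nhds_gt continuous_intros continuous_ident)
      (auto simp: m_def)
  have descent: "\<exists>D. ((\<lambda>t. lyapunov (x t) - 0) has_real_derivative D) (at t) \<and> D \<le> - (lyapunov_rate w y / 2)"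
    if "0 < t" "?Q (x t)" for t
    using lyapunov_derivative[OF that(1)] that(2) by (intro exI[of _ "- lyapunov_rate w (x t)"]) simp
  show False
    by (rule omega_limit_no_uniform_descent[OF s continuous_on_const _ _ \<open>0 < m\<close> Q _ descent])
      (use rate in auto)
qed

end

section \<open>Non-vanishing curvature where the shear vanishes\<close>

lemma Scurv_diff: "Scurv a b c - Scurv b c a = (a - b) * (a + b - c)"
  unfolding Scurv_def by (simp add: power2_eq_square algebra_simps divide_simps)

text \<open>Where \<open>q = 0\<close> we have \<open>\<Sigma> = 0\<close> and \<open>\<Omega> = 0\<close>; the curvature could only vanish there
  at the isotropic point \<open>N\<^sub>1 = N\<^sub>2 = N\<^sub>3 = 2\<close>, which violates the Gauss constraint.\<close>
lemma Scurv_nonzero: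
  fixes n1 n2 n3 h :: real
  assumes n: "0 < n1" "0 < n2" "0 < n3"
    and Gauss: "h ^ 2 + (n1 * n2 + n1 * n3 + n2 * n3) / 6 = 1"
    and "n1 ^ 2 + n2 ^ 2 + n3 ^ 2 = 12"
  shows "0 < Scurv n1 n2 n3 ^ 2 + Scurv n2 n3 n1 ^ 2 + Scurv n3 n1 n2 ^ 2"
proof (rule ccontr)
  assume "\<not> ?thesis"
  then have "Scurv n1 n2 n3 ^ 2 + Scurv n2 n3 n1 ^ 2 + Scurv n3 n1 n2 ^ 2 = 0"
    by (simp add: add_nonneg_nonneg order.antisym)
  then have "Scurv n1 n2 n3 = 0" "Scurv n2 n3 n1 = 0" "Scurv n3 n1 n2 = 0"
    by (simp_all add: add_nonneg_eq_0_iff)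
  then have d1: "(n1 - n2) * (n1 + n2 - n3) = 0" and d2: "(n2 - n3) * (n2 + n3 - n1) = 0"
    using Scurv_diff[of n1 n2 n3] Scurv_diff[of n2 n3 n1] by simp_all
  have "n1 = n2"
  proof (rule ccontr)
    assume "n1 \<noteq> n2"
    then have "n3 = n1 + n2" using d1 by simp
    then show False using d2 n by simp
  qed
  moreover have "n2 = n3"
    using d2 \<open>n1 = n2\<close> n by auto
  ultimately have "h ^ 2 + 2 = 1"
    using Gauss assms(5) by (simp add: power2_eq_square)
  then show False using zero_le_power2[of h] by linarith
qed

lemma abs_sum_sq_le: "(\<bar>a\<bar> + \<bar>b\<bar> + \<bar>c\<bar>) ^ 2 \<le> 3 * (a ^ 2 + b ^ 2 + c ^ 2 :: real)"
proof -
  have "3 * (a ^ 2 + b ^ 2 + c ^ 2) - (\<bar>a\<bar> + \<bar>b\<bar> + \<bar>c\<bar>) ^ 2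
      = (\<bar>a\<bar> - \<bar>b\<bar>) ^ 2 + (\<bar>b\<bar> - \<bar>c\<bar>) ^ 2 + (\<bar>a\<bar> - \<bar>c\<bar>) ^ 2"
    by (simp add: power2_eq_square algebra_simps)
  moreover have "0 \<le> (\<bar>a\<bar> - \<bar>b\<bar>) ^ 2 + (\<bar>b\<bar> - \<bar>c\<bar>) ^ 2 + (\<bar>a\<bar> - \<bar>c\<bar>) ^ 2" by simp
  ultimately show ?thesis by linarith
qed

lemma abs_dot3_le:
  "\<bar>s1 * b1 + s2 * b2 + s3 * b3\<bar> \<le> (\<bar>b1\<bar> + \<bar>b2\<bar> + \<bar>b3\<bar>) * (\<bar>s1\<bar> + \<bar>s2\<bar> + \<bar>s3\<bar>)"
  for s1 s2 s3 b1 b2 b3 :: real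
proof -
  have "\<bar>s1 * b1 + s2 * b2 + s3 * b3\<bar> \<le> \<bar>s1 * b1 + s2 * b2\<bar> + \<bar>s3 * b3\<bar>"
    by (rule abs_triangle_ineq)
  also have "\<dots> \<le> \<bar>s1\<bar> * \<bar>b1\<bar> + \<bar>s2\<bar> * \<bar>b2\<bar> + \<bar>s3\<bar> * \<bar>b3\<bar>"
    using abs_triangle_ineq[of "s1 * b1" "s2 * b2"] by (simp add: abs_mult)
  also have "\<dots> \<le> (\<bar>b1\<bar> + \<bar>b2\<bar> + \<bar>b3\<bar>) * (\<bar>s1\<bar> + \<bar>s2\<bar> + \<bar>s3\<bar>)"
    by (simp add: algebra_simps add_mono mult_left_mono)
  finally show ?thesis .
qed

text \<open>The quadratic estimate behind the descent of the corrected Lyapunov function: with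
  \<open>P = s \<bullet> b\<close> and \<open>|s|\<^sup>2 \<le> 3q\<close>, the term \<open>\<epsilon> A P\<close> is absorbed by \<open>c\<^sub>1 q\<close> for \<open>\<epsilon>\<close> small.\<close>
lemma curvature_descent_estimate:
  fixes s1 s2 s3 b1 b2 b3 q Ph A Sb c1 \<gamma> KA \<epsilon> :: real
  assumes q: "(s1 ^ 2 + s2 ^ 2 + s3 ^ 2) / 3 \<le> q" and Ph: "c1 * q \<le> Ph"
    and "0 < c1" "0 < \<gamma>" and Sb: "\<gamma> / 2 < Sb" and A: "\<bar>A\<bar> \<le> KA"
    and \<epsilon>: "\<epsilon> = c1 * \<gamma> / (9 * ((KA * (\<bar>b1\<bar> + \<bar>b2\<bar> + \<bar>b3\<bar>)) ^ 2 + 1))"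
  shows "- Ph - \<epsilon> * (A * (s1 * b1 + s2 * b2 + s3 * b3) + Sb) \<le> - (\<epsilon> * \<gamma> / 4)"
proof -
  define U where "U = \<bar>s1\<bar> + \<bar>s2\<bar> + \<bar>s3\<bar>"
  define X where "X = KA * (\<bar>b1\<bar> + \<bar>b2\<bar> + \<bar>b3\<bar>)"
  have "0 < 9 * (X ^ 2 + 1)" by (simp add: add_nonneg_pos)
  then have "0 < \<epsilon>" unfolding \<epsilon> X_def[symmetric] using \<open>0 < c1\<close> \<open>0 < \<gamma>\<close> by simp
  have "\<epsilon> * X ^ 2 \<le> c1 * \<gamma> / 9"
  proof -
    have "0 < X ^ 2 + 1" by (simp add: add_nonneg_pos)
    then have "\<epsilon> * X ^ 2 = c1 * \<gamma> / 9 * (X ^ 2 / (X ^ 2 + 1))"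
      unfolding \<epsilon> X_def[symmetric] by (simp add: field_simps)
    also have "\<dots> \<le> c1 * \<gamma> / 9"
      using \<open>0 < c1\<close> \<open>0 < \<gamma>\<close> by (intro mult_left_le) (simp_all add: add_nonneg_pos)
    finally show ?thesis .
  qed
  have U2: "U ^ 2 \<le> 9 * q" unfolding U_def using abs_sum_sq_le[of s1 s2 s3] q by linarith
  have "\<bar>A * (s1 * b1 + s2 * b2 + s3 * b3)\<bar> \<le> KA * ((\<bar>b1\<bar> + \<bar>b2\<bar> + \<bar>b3\<bar>) * U)"
    unfolding abs_mult U_def using A abs_dot3_le by (intro mult_mono) auto
  then have AP: "- (X * U) \<le> A * (s1 * b1 + s2 * b2 + s3 * b3)"
    unfolding X_def by (simp add: abs_le_iff mult.assoc)
  have "0 \<le> (c1 * U / 9 - \<epsilon> * X / 2) ^ 2 + \<epsilon> * (c1 * \<gamma> / 36 - \<epsilon> * X ^ 2 / 4)"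
    using \<open>0 < \<epsilon>\<close> \<open>\<epsilon> * X ^ 2 \<le> c1 * \<gamma> / 9\<close> by (intro add_nonneg_nonneg) simp_all
  also have "\<dots> = c1 / 9 * (c1 * U ^ 2 / 9 - \<epsilon> * X * U + \<epsilon> * \<gamma> / 4)"
    by (simp add: power2_eq_square algebra_simps)
  finally have main: "0 \<le> c1 * U ^ 2 / 9 - \<epsilon> * X * U + \<epsilon> * \<gamma> / 4"
    using \<open>0 < c1\<close> by (simp add: zero_le_mult_iff)
  have "c1 * (U ^ 2 / 9) \<le> c1 * q" using U2 \<open>0 < c1\<close> by (intro mult_left_mono) simp_all
  then have "c1 * U ^ 2 / 9 \<le> Ph" using Ph by simp
  moreover have "\<epsilon> * - (X * U) \<le> \<epsilon> * (A * (s1 * b1 + s2 * b2 + s3 * b3))"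
    using AP \<open>0 < \<epsilon>\<close> by (intro mult_left_mono) simp_all
  moreover have "\<epsilon> * \<gamma> / 2 \<le> \<epsilon> * Sb" using Sb \<open>0 < \<epsilon>\<close> by simp
  ultimately show ?thesis using main by (simp add: algebra_simps)
qed

context B_IX_trajectory
begin

lemma shear_curvature_derivative:
  assumes "0 < t"
  shows "((\<lambda>t. S1 (x t) * b1 + S2 (x t) * b2 + S3 (x t) * b3) has_real_derivative
      ((2 - qb w (x t)) * Hc (x t) - Fb (x t)) * (S1 (x t) * b1 + S2 (x t) * b2 + S3 (x t) * b3)
      + (Scurv (N1 (x t)) (N2 (x t)) (N3 (x t)) * b1 + Scurv (N2 (x t)) (N3 (x t)) (N1 (x t)) * b2
         + Scurv (N3 (x t)) (N1 (x t)) (N2 (x t)) * b3)) (at t)"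
proof -
  have "((\<lambda>t. S1 (x t) * b1 + S2 (x t) * b2 + S3 (x t) * b3) has_real_derivative
      S1 (vfield w (x t)) * b1 + S2 (vfield w (x t)) * b2 + S3 (vfield w (x t)) * b3) (at t within {0..})"
    using assms by (auto intro!: derivative_eq_intros component_derivatives)
  then show ?thesis
    using at_within_nonneg[OF assms] by (simp add: vfield_components algebra_simps)
qed

lemma corrected_lyapunov_descent:
  assumes t: "0 < t" and "0 < c1" "0 < \<gamma>"
    and R: "c1 < 3 * (N1 (x t) * N2 (x t) * N3 (x t)) / Hc (x t) ^ 4"
    and A: "\<bar>(2 - qb w (x t)) * Hc (x t) - Fb (x t)\<bar> \<le> KA"
    and Sb: "\<gamma> / 2 < Scurv (N1 (x t)) (N2 (x t)) (N3 (x t)) * b1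
      + Scurv (N2 (x t)) (N3 (x t)) (N1 (x t)) * b2 + Scurv (N3 (x t)) (N1 (x t)) (N2 (x t)) * b3"
    and \<epsilon>: "\<epsilon> = c1 * \<gamma> / (9 * ((KA * (\<bar>b1\<bar> + \<bar>b2\<bar> + \<bar>b3\<bar>)) ^ 2 + 1))"
  shows "\<exists>D. ((\<lambda>t. lyapunov (x t) - \<epsilon> * (S1 (x t) * b1 + S2 (x t) * b2 + S3 (x t) * b3))
    has_real_derivative D) (at t) \<and> D \<le> - (\<epsilon> * \<gamma> / 4)"
proof (intro exI conjI)
  show "((\<lambda>t. lyapunov (x t) - \<epsilon> * (S1 (x t) * b1 + S2 (x t) * b2 + S3 (x t) * b3)) has_real_derivative
      - lyapunov_rate w (x t) - \<epsilon> * (((2 - qb w (x t)) * Hc (x t) - Fb (x t))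
        * (S1 (x t) * b1 + S2 (x t) * b2 + S3 (x t) * b3)
        + (Scurv (N1 (x t)) (N2 (x t)) (N3 (x t)) * b1 + Scurv (N2 (x t)) (N3 (x t)) (N1 (x t)) * b2
           + Scurv (N3 (x t)) (N1 (x t)) (N2 (x t)) * b3))) (at t)"
    by (rule DERIV_cong[OF DERIV_diff[OF lyapunov_derivative[OF t]
          DERIV_cmult[OF shear_curvature_derivative[OF t]]]]) simp
  have Omg: "0 \<le> Omg (x t)" using Omg_nonneg t by simp
  have "c1 * qb w (x t) \<le> 3 * (N1 (x t) * N2 (x t) * N3 (x t)) / Hc (x t) ^ 4 * qb w (x t)"
    using mult_right_mono[OF less_imp_le[OF R] qb_nonneg[OF w_gt Omg]] .
  also have "\<dots> = lyapunov_rate w (x t)" by (simp add: lyapunov_rate_def)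
  finally show "- lyapunov_rate w (x t) - \<epsilon> * (((2 - qb w (x t)) * Hc (x t) - Fb (x t))
        * (S1 (x t) * b1 + S2 (x t) * b2 + S3 (x t) * b3)
        + (Scurv (N1 (x t)) (N2 (x t)) (N3 (x t)) * b1 + Scurv (N2 (x t)) (N3 (x t)) (N1 (x t)) * b2
           + Scurv (N3 (x t)) (N1 (x t)) (N2 (x t)) * b3)) \<le> - (\<epsilon> * \<gamma> / 4)"
    by (rule curvature_descent_estimate[OF qb_ge_shear[OF w_gt Omg] _ assms(2,3) Sb A \<epsilon>])
qed

lemma uniform_descent_near_curved_point:
  assumes H: "0 < Hc y" and N: "0 < N1 y" "0 < N2 y" "0 < N3 y"
    and b: "b1 = Scurv (N1 y) (N2 y) (N3 y)" "b2 = Scurv (N2 y) (N3 y) (N1 y)" "b3 = Scurv (N3 y) (N1 y) (N2 y)"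
    and \<gamma>: "0 < b1 ^ 2 + b2 ^ 2 + b3 ^ 2"
  obtains c m Q \<epsilon> where "0 < c" "0 < m" "eventually Q (nhds y)"
    "\<And>z. Q z \<Longrightarrow> m \<le> N1 z \<and> m \<le> N2 z \<and> m \<le> N3 z"
    "\<And>t. 0 < t \<Longrightarrow> Q (x t) \<Longrightarrow> \<exists>D. ((\<lambda>t. lyapunov (x t) - \<epsilon> * (S1 (x t) * b1 + S2 (x t) * b2 + S3 (x t) * b3))
      has_real_derivative D) (at t) \<and> D \<le> - c"
proof -
  define \<gamma> where "\<gamma> = b1 ^ 2 + b2 ^ 2 + b3 ^ 2"
  define A where "A z = (2 - qb w z) * Hc z - Fb z" for z
  define R where "R z = 3 * (N1 z * N2 z * N3 z) / Hc z ^ 4" for z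
  define Sb where "Sb z = Scurv (N1 z) (N2 z) (N3 z) * b1 + Scurv (N2 z) (N3 z) (N1 z) * b2
    + Scurv (N3 z) (N1 z) (N2 z) * b3" for z
  define KA where "KA = \<bar>A y\<bar> + 1"
  define c1 where "c1 = R y / 2"
  define \<epsilon> where "\<epsilon> = c1 * \<gamma> / (9 * ((KA * (\<bar>b1\<bar> + \<bar>b2\<bar> + \<bar>b3\<bar>)) ^ 2 + 1))"
  define m where "m = Min {N1 y, N2 y, N3 y} / 2"
  define Q where "Q z \<longleftrightarrow> c1 < R z \<and> \<gamma> / 2 < Sb z \<and> \<bar>A z\<bar> < KA \<and> m < N1 z \<and> m < N2 z \<and> m < N3 z" for z
  have "0 < \<gamma>" using \<gamma> by (simp add: \<gamma>_def)
  have "0 < R y" using H N by (simp add: R_def)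
  then have "0 < c1" "c1 < R y" by (simp_all add: c1_def)
  have "0 < \<epsilon> * \<gamma> / 4" unfolding \<epsilon>_def using \<open>0 < c1\<close> \<open>0 < \<gamma>\<close>
    by (intro divide_pos_pos mult_pos_pos) (simp_all add: add_nonneg_pos)
  moreover have "0 < m" using N by (simp add: m_def)
  moreover have "eventually Q (nhds y)"
  proof -
    have cont: "isCont R y" "isCont Sb y" "isCont (\<lambda>z. KA - \<bar>A z\<bar>) y"
      using H unfolding R_def Sb_def A_def by (auto intro!: continuous_intros continuous_ident)
    have Sby: "\<gamma> / 2 < Sb y" and KAy: "0 < KA - \<bar>A y\<bar>"
      using \<open>0 < \<gamma>\<close> by (simp_all add: KA_def Sb_def \<gamma>_def b power2_eq_square)
    have "eventually (\<lambda>z. c1 < R z) (nhds y)"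
      by (rule eventually_nhds_gt[OF cont(1) \<open>c1 < R y\<close>])
    moreover have "eventually (\<lambda>z. \<gamma> / 2 < Sb z) (nhds y)"
      by (rule eventually_nhds_gt[OF cont(2) Sby])
    moreover have "eventually (\<lambda>z. \<bar>A z\<bar> < KA) (nhds y)"
      using eventually_nhds_gt[OF cont(3) KAy] by (rule eventually_mono) simp
    moreover have "eventually (\<lambda>z. m < N1 z) (nhds y)" "eventually (\<lambda>z. m < N2 z) (nhds y)"
      "eventually (\<lambda>z. m < N3 z) (nhds y)"
      using N by (auto intro!: eventually_nhds_gt continuous_intros continuous_ident simp: m_def)
    ultimately show ?thesis
      unfolding Q_def by (intro eventually_conj)
  qed
  moreover have "Q z \<Longrightarrow> m \<le> N1 z \<and> m \<le> N2 z \<and> m \<le> N3 z" for z by (simp add: Q_def)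
  moreover have "\<exists>D. ((\<lambda>t. lyapunov (x t) - \<epsilon> * (S1 (x t) * b1 + S2 (x t) * b2 + S3 (x t) * b3))
      has_real_derivative D) (at t) \<and> D \<le> - (\<epsilon> * \<gamma> / 4)" if "0 < t" "Q (x t)" for t
    using that by (intro corrected_lyapunov_descent[OF _ \<open>0 < c1\<close> \<open>0 < \<gamma>\<close>, of _ KA])
      (auto simp: Q_def R_def A_def Sb_def \<epsilon>_def)
  ultimately show ?thesis using that by blast
qed

lemma omega_limit_N_zero:
  assumes y: "y \<in> omega_limit x" shows "N1 y = 0 \<or> N2 y = 0 \<or> N3 y = 0"
proof (rule ccontr)
  assume "\<not> ?thesis"
  moreover have adm: "y \<in> admissible_nonneg" using omega_limit_in_admissible_nonneg y by blast
  ultimately have N: "0 < N1 y" "0 < N2 y" "0 < N3 y" by (auto simp: admissible_nonneg_def)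
  obtain s where s: "filterlim s at_top sequentially" "((\<lambda>n. x (s n)) \<longlongrightarrow> y) sequentially"
    using y by (auto simp: omega_limit_def)
  have "0 \<le> Omg y" using adm by (simp add: admissible_nonneg_def admissible_def)
  note shear_free = qb_eq_0D[OF w_gt this omega_limit_qb_zero[OF y N]]
  define b1 where "b1 = Scurv (N1 y) (N2 y) (N3 y)"
  define b2 where "b2 = Scurv (N2 y) (N3 y) (N1 y)"
  define b3 where "b3 = Scurv (N3 y) (N1 y) (N2 y)"
  have "0 < b1 ^ 2 + b2 ^ 2 + b3 ^ 2" unfolding b1_def b2_def b3_def
    using adm shear_free by (intro Scurv_nonzero[OF N, of "Hc y"])
      (auto simp: admissible_nonneg_def admissible_def Omg_def Sig2_def)
  then obtain c m Q \<epsilon> where "0 < c" "0 < m" "eventually Q (nhds y)"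
    "\<And>z. Q z \<Longrightarrow> m \<le> N1 z \<and> m \<le> N2 z \<and> m \<le> N3 z"
    and descent: "\<And>t. 0 < t \<Longrightarrow> Q (x t) \<Longrightarrow> \<exists>D. ((\<lambda>t. lyapunov (x t)
      - \<epsilon> * (S1 (x t) * b1 + S2 (x t) * b2 + S3 (x t) * b3)) has_real_derivative D) (at t) \<and> D \<le> - c"
    using uniform_descent_near_curved_point[OF omega_limit_H_pos[OF y N] N b1_def b2_def b3_def] by blast
  define P where "P z = \<epsilon> * (S1 z * b1 + S2 z * b2 + S3 z * b3)" for z
  have "P y' = 0" if "y' \<in> omega_limit x" "0 < N1 y'" "0 < N2 y'" "0 < N3 y'" for y'
  proof -
    have "0 \<le> Omg y'" using that(1) omega_limit_in_admissible_nonneg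
      by (auto simp: admissible_nonneg_def admissible_def)
    then show ?thesis using qb_eq_0D[OF w_gt _ omega_limit_qb_zero[OF that]] by (simp add: P_def)
  qed
  moreover have "continuous_on UNIV P" unfolding P_def by (intro continuous_intros)
  ultimately show False
    using omega_limit_no_uniform_descent[OF s _ _ \<open>0 < c\<close> \<open>0 < m\<close>] descent \<open>eventually Q (nhds y)\<close>
      \<open>\<And>z. Q z \<Longrightarrow> m \<le> N1 z \<and> m \<le> N2 z \<and> m \<le> N3 z\<close> unfolding P_def by blast
qed

end

section \<open>Approximation by Bianchi VII\<open>\<^sub>0\<close> states\<close>

definition state :: "real \<Rightarrow> real \<Rightarrow> real \<Rightarrow> real \<Rightarrow> real \<Rightarrow> real \<Rightarrow> real \<Rightarrow> real^7" where
  "state h s1 s2 s3 n1 n2 n3 = (\<chi> i. if i = 0 then h else if i = 1 then s1 else if i = 2 then s2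
     else if i = 3 then s3 else if i = 4 then n1 else if i = 5 then n2 else n3)"

lemma state_components [simp]:
  "Hc (state h s1 s2 s3 n1 n2 n3) = h" "S1 (state h s1 s2 s3 n1 n2 n3) = s1"
  "S2 (state h s1 s2 s3 n1 n2 n3) = s2" "S3 (state h s1 s2 s3 n1 n2 n3) = s3"
  "N1 (state h s1 s2 s3 n1 n2 n3) = n1" "N2 (state h s1 s2 s3 n1 n2 n3) = n2"
  "N3 (state h s1 s2 s3 n1 n2 n3) = n3"
  by (simp_all add: state_def Hc_def S1_def S2_def S3_def N1_def N2_def N3_def)

lemma state_eta: "state (Hc z) (S1 z) (S2 z) (S3 z) (N1 z) (N2 z) (N3 z) = z"
  unfolding vec_eq_iff state_def Hc_def S1_def S2_def S3_def N1_def N2_def N3_def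
  using UNIV_7 by auto

lemma tendsto_state [tendsto_intros]:
  assumes "(h \<longlongrightarrow> h0) F" "(s1 \<longlongrightarrow> s10) F" "(s2 \<longlongrightarrow> s20) F" "(s3 \<longlongrightarrow> s30) F"
    "(n1 \<longlongrightarrow> n10) F" "(n2 \<longlongrightarrow> n20) F" "(n3 \<longlongrightarrow> n30) F"
  shows "((\<lambda>e. state (h e) (s1 e) (s2 e) (s3 e) (n1 e) (n2 e) (n3 e))
    \<longlongrightarrow> state h0 s10 s20 s30 n10 n20 n30) F"
proof (rule vec_tendstoI)
  fix i :: 7
  have "i \<in> {0, 1, 2, 3, 4, 5, 6}" using UNIV_7 by blast
  then show "((\<lambda>e. state (h e) (s1 e) (s2 e) (s3 e) (n1 e) (n2 e) (n3 e) $ i)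
      \<longlongrightarrow> state h0 s10 s20 s30 n10 n20 n30 $ i) F"
    using assms by (auto simp: state_def)
qed

text \<open>The cyclic permutation \<open>(\<alpha>\<beta>\<gamma>) \<mapsto> (\<beta>\<gamma>\<alpha>)\<close> of the indices is a symmetry of the constraints.\<close>
definition cycle :: "real^7 \<Rightarrow> real^7" where
  "cycle z = state (Hc z) (S2 z) (S3 z) (S1 z) (N2 z) (N3 z) (N1 z)"

lemma continuous_on_cycle: "continuous_on A cycle"
  unfolding cycle_def state_def
  by (intro continuous_on_vec_lambda continuous_on_if_const continuous_intros continuous_on_id)

lemma admissible_cycle: "admissible (cycle z) \<longleftrightarrow> admissible z"
  unfolding admissible_def Omg_def Sig2_def cycle_def state_components by (simp add: ac_simps)

lemma admissible_nonneg_cycle: "z \<in> admissible_nonneg \<Longrightarrow> cycle z \<in> admissible_nonneg"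
  by (auto simp: admissible_nonneg_def admissible_cycle) (auto simp: cycle_def)

lemma cycle_cycle_cycle: "cycle (cycle (cycle z)) = z"
  by (simp add: cycle_def state_eta)

lemma cycle_B_N1N2: "cycle ` B_N1N2 \<subseteq> B_N3N1"
  and cycle_B_N3N1: "cycle ` B_N3N1 \<subseteq> B_N2N3"
  by (auto simp: B_N1N2_def B_N3N1_def B_N2N3_def admissible_cycle) (auto simp: cycle_def)

lemma cycle_closure:
  assumes "cycle ` S \<subseteq> T" shows "cycle ` closure S \<subseteq> closure T"
  using assms closure_subset
  by (intro image_closure_subset continuous_on_cycle) blast+

lemma VII0_perturbation_product:
  fixes n1 n2 e :: real
  assumes "n1 * n2 \<le> 6" "n1 ^ 2 + n2 ^ 2 \<le> 12" "0 \<le> n1" "0 \<le> n2" "0 < e" "e \<le> 1 / 2"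
  shows "((1 - e) * n1 + e / 10) * ((1 - e) * n2 + e / 10) < 6"
proof -
  have "(n1 + n2) ^ 2 \<le> 25"
    unfolding power2_sum using assms(2) sum_squares_bound[of n1 n2] by linarith
  then have "n1 + n2 \<le> 5" using power2_le_imp_le[of "n1 + n2" 5] by simp
  have "((1 - e) * n1 + e / 10) * ((1 - e) * n2 + e / 10)
      = (1 - e) ^ 2 * (n1 * n2) + (1 - e) * (e / 10) * (n1 + n2) + e ^ 2 / 100"
    by (simp add: power2_eq_square field_simps)
  also have "\<dots> \<le> (1 - e) ^ 2 * 6 + (1 - e) * (e / 10) * 5 + e ^ 2 / 100"
    using assms \<open>n1 + n2 \<le> 5\<close> by (intro add_mono mult_left_mono) auto
  also have "\<dots> = 6 - e * (23 / 2 - e * 551 / 100)"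
    by (simp add: power2_eq_square field_simps)
  also have "\<dots> < 6" using assms(5,6) by (simp add: mult_pos_pos)
  finally show ?thesis .
qed

lemma VII0_perturbation_Omg:
  fixes a1 a2 a3 n1 n2 e :: real
  assumes "0 \<le> 1 - (a1 ^ 2 + a2 ^ 2 + a3 ^ 2) / 6 - (n1 ^ 2 + n2 ^ 2) / 12" "0 \<le> e" "e \<le> 1"
  shows "0 \<le> 1 - (((1 - e) * a1) ^ 2 + ((1 - e) * a2) ^ 2 + ((1 - e) * a3) ^ 2) / 6
    - (((1 - e) * n1 + e / 10) ^ 2 + ((1 - e) * n2 + e / 10) ^ 2) / 12"
proof -
  have rearrange: "0 \<le> 1 - A / 6 - B / 12 \<longleftrightarrow> A / 6 + B / 12 \<le> 1" for A B :: real
    by linarith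
  have n: "((1 - e) * m + e / 10) ^ 2 \<le> (1 - e) * m ^ 2 + e / 100" for m
  proof -
    have "(1 - e) * m ^ 2 + e / 100 - ((1 - e) * m + e / 10) ^ 2 = e * (1 - e) * (m - 1 / 10) ^ 2"
      by (simp add: power2_eq_square field_simps)
    moreover have "0 \<le> e * (1 - e) * (m - 1 / 10) ^ 2" using assms(2,3) by simp
    ultimately show ?thesis by linarith
  qed
  have a: "((1 - e) * a) ^ 2 \<le> (1 - e) * a ^ 2" for a
  proof -
    have "(1 - e) ^ 2 \<le> 1 - e" using assms(2,3) by (simp add: power2_eq_square mult_left_le)
    then show ?thesis by (simp add: power_mult_distrib mult_right_mono)
  qed
  have "(((1 - e) * a1) ^ 2 + ((1 - e) * a2) ^ 2 + ((1 - e) * a3) ^ 2) / 6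
      + (((1 - e) * n1 + e / 10) ^ 2 + ((1 - e) * n2 + e / 10) ^ 2) / 12
    \<le> ((1 - e) * a1 ^ 2 + (1 - e) * a2 ^ 2 + (1 - e) * a3 ^ 2) / 6
      + ((1 - e) * n1 ^ 2 + e / 100 + ((1 - e) * n2 ^ 2 + e / 100)) / 12"
    by (intro add_mono divide_right_mono a n) simp_all
  also have "\<dots> = (1 - e) * ((a1 ^ 2 + a2 ^ 2 + a3 ^ 2) / 6 + (n1 ^ 2 + n2 ^ 2) / 12) + e / 600"
    by (simp add: field_simps)
  also have "\<dots> \<le> (1 - e) * 1 + e / 600"
  proof -
    have "(a1 ^ 2 + a2 ^ 2 + a3 ^ 2) / 6 + (n1 ^ 2 + n2 ^ 2) / 12 \<le> 1"
      using assms(1) by (simp only: rearrange)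
    then show ?thesis using assms(3) by (intro add_right_mono mult_left_mono) auto
  qed
  also have "\<dots> \<le> 1" using assms(2) by simp
  finally show ?thesis by (simp only: rearrange)
qed

text \<open>Shrink the shear and move \<open>N\<^sub>1, N\<^sub>2\<close> slightly towards \<open>1/10\<close>; then \<open>H\<close> is recovered from
  the Gauss constraint and is positive.\<close>
lemma closure_B_N1N2:
  assumes "y \<in> admissible_nonneg" "N3 y = 0" shows "y \<in> closure B_N1N2"
proof -
  define m1 where "m1 e = (1 - e) * N1 y + e / 10" for e
  define m2 where "m2 e = (1 - e) * N2 y + e / 10" for e
  define z where "z e = state (sqrt (1 - m1 e * m2 e / 6)) ((1 - e) * S1 y) ((1 - e) * S2 y)
    ((1 - e) * S3 y) (m1 e) (m2 e) 0" for e
  have adm: "S1 y + S2 y + S3 y = 0" "Hc y ^ 2 + N1 y * N2 y / 6 = 1"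
    "0 \<le> 1 - (S1 y ^ 2 + S2 y ^ 2 + S3 y ^ 2) / 6 - (N1 y ^ 2 + N2 y ^ 2) / 12"
    and nonneg: "0 \<le> N1 y" "0 \<le> N2 y" "0 \<le> Hc y"
    using assms by (auto simp: admissible_nonneg_def admissible_def Omg_def Sig2_def)
  have "z e \<in> B_N1N2" if e: "0 < e" "e < 1 / 2" for e
  proof -
    have "N1 y * N2 y \<le> 6" using adm(2) zero_le_power2[of "Hc y"] by linarith
    moreover have "N1 y ^ 2 + N2 y ^ 2 \<le> 12"
    proof -
      have bound: "B \<le> 12" if "0 \<le> 1 - A / 6 - B / 12" "0 \<le> A" for A B :: real
        using that by linarith
      show ?thesis by (rule bound[OF adm(3)]) simp
    qed
    ultimately have "m1 e * m2 e < 6"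
      unfolding m1_def m2_def using nonneg e by (intro VII0_perturbation_product) auto
    moreover have "0 < m1 e" "0 < m2 e" using nonneg e by (simp_all add: m1_def m2_def add_nonneg_pos)
    moreover have "(1 - e) * S1 y + (1 - e) * S2 y + (1 - e) * S3 y = 0"
      by (simp only: distrib_left[symmetric] adm(1) mult_zero_right)
    moreover note VII0_perturbation_Omg[OF adm(3), of e] e
    ultimately show ?thesis
      by (auto simp: z_def B_N1N2_def admissible_def Omg_def Sig2_def m1_def[symmetric] m2_def[symmetric])
  qed
  then have "eventually (\<lambda>e. z e \<in> closure B_N1N2) (at_right 0)"
    unfolding eventually_at_right_field by (intro exI[of _ "1 / 2"]) (auto intro: closure_subset[THEN subsetD])
  moreover have "(z \<longlongrightarrow> z 0) (at_right 0)"
    unfolding z_def m1_def m2_def by (intro tendsto_intros) simp_all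
  moreover have "z 0 = y"
  proof -
    have "sqrt (1 - N1 y * N2 y / 6) = Hc y"
      using adm(2) nonneg(3) by (intro real_sqrt_unique) auto
    then show ?thesis using state_eta[of y] assms(2) by (simp add: z_def m1_def m2_def)
  qed
  ultimately show ?thesis
    using Lim_in_closed_set[OF closed_closure] by fastforce
qed

lemma boundary_in_closure_B_VII0:
  assumes "y \<in> admissible_nonneg" "N1 y = 0 \<or> N2 y = 0 \<or> N3 y = 0"
  shows "y \<in> closure B_VII0"
proof -
  have "closure B_N1N2 \<union> closure B_N2N3 \<union> closure B_N3N1 \<subseteq> closure B_VII0"
    unfolding B_VII0_def by (auto intro: closure_mono[THEN subsetD])
  moreover have "y \<in> closure B_N1N2 \<union> closure B_N2N3 \<union> closure B_N3N1"
    using assms(2)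
  proof (elim disjE)
    assume "N1 y = 0"
    then have "cycle y \<in> closure B_N1N2"
      by (intro closure_B_N1N2 admissible_nonneg_cycle assms(1)) (simp add: cycle_def)
    then have "cycle (cycle y) \<in> closure B_N3N1"
      by (rule subsetD[OF cycle_closure[OF cycle_B_N1N2] imageI])
    then have "cycle (cycle (cycle y)) \<in> closure B_N2N3"
      by (rule subsetD[OF cycle_closure[OF cycle_B_N3N1] imageI])
    then show ?thesis by (simp add: cycle_cycle_cycle)
  next
    assume "N2 y = 0"
    then have "cycle (cycle y) \<in> closure B_N1N2"
      by (intro closure_B_N1N2 admissible_nonneg_cycle assms(1)) (simp add: cycle_def)
    then have "cycle (cycle (cycle y)) \<in> closure B_N3N1"
      by (rule subsetD[OF cycle_closure[OF cycle_B_N1N2] imageI])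
    then show ?thesis by (simp add: cycle_cycle_cycle)
  next
    assume "N3 y = 0"
    then show ?thesis using closure_B_N1N2[OF assms(1)] by blast
  qed
  ultimately show ?thesis by blast
qed

theorem lemma2:
  fixes w :: real and x :: "real \<Rightarrow> real^7"
  assumes "-(1/3) < w" and "w < 1"
    and "x 0 \<in> B_IX"
    and "\<And>t. t \<ge> 0 \<Longrightarrow> (x has_vector_derivative vfield w (x t)) (at t within {0..})"
  shows "omega_limit x \<noteq> {} \<and> omega_limit x \<subseteq> closure B_VII0"
proof -
  interpret B_IX_trajectory w x
    using assms(1,3,4) by unfold_locales
  have "omega_limit x \<noteq> {}"
    by (rule omega_limit_nonempty[OF compact_admissible_nonneg trajectory_in_admissible_nonneg])
  moreover have "omega_limit x \<subseteq> closure B_VII0"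
    using omega_limit_in_admissible_nonneg omega_limit_N_zero boundary_in_closure_B_VII0 by blast
  ultimately show ?thesis by blast
qed

end
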